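(* Let $P$ and $Q$ be probability distributions (with densities, $P$ absolutely continuous with respect to $Q$), let $\epsilon \ge 0$, $\delta > 0$ and $\tau > 1$. Let $Y_1, \dots, Y_s$ be i.i.d. samples from the privacy loss distribution of $(P,Q)$, i.e. each $Y_k = \log\frac{P(X_k)}{Q(X_k)}$ with $X_k \sim P$ drawn independently, and let $$\hat{\delta} = \frac{1}{s}\sum_{k=1}^s \max\{1 - e^{\epsilon - Y_k}, 0\}.$$ If $H_{e^\epsilon}(P,Q) \ge \tau\delta$, then $$\Pr[\hat{\delta} < \delta] \le \exp\left(-\frac{s(\tau-1)^2\delta}{8\tau/3 - 2/3}\right).$$
   Context: For distributions $P, Q$ and $\alpha \ge 0$, the $\alpha$-hockey-stick divergence is $H_\alpha(P,Q) = \int_x \max\{P(x) - \alpha Q(x), 0\}\,dx$. It satisfies $H_\alpha(P,Q) = \mathbb{E}_Y[\max\{1-\alpha e^{-Y},0\}]$ where $Y$ follows the privacy loss distribution of $(P,Q)$, so $\hat\delta$ is a Monte Carlo estimate of $H_{e^\epsilon}(P,Q)$. *)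

theory Defs
  imports "HOL-Probability.Probability"
begin

text \<open>Distributions P and Q are given by densities p, q with respect to a base measure mu.\<close>

definition hockey_stick :: "'a measure \<Rightarrow> ('a \<Rightarrow> real) \<Rightarrow> ('a \<Rightarrow> real) \<Rightarrow> real \<Rightarrow> real" where
  "hockey_stick mu p q alpha = (\<integral>x. max (p x - alpha * q x) 0 \<partial>mu)"

definition privacy_loss :: "('a \<Rightarrow> real) \<Rightarrow> ('a \<Rightarrow> real) \<Rightarrow> 'a \<Rightarrow> real" where
  "privacy_loss p q x = ln (p x / q x)"

definition delta_hat :: "nat \<Rightarrow> real \<Rightarrow> ('a \<Rightarrow> real) \<Rightarrow> ('a \<Rightarrow> real) \<Rightarrow> (nat \<Rightarrow> 'a) \<Rightarrow> real" where
  "delta_hat s eps p q X =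
     (1 / real s) * (\<Sum>k<s. max (1 - exp (eps - privacy_loss p q (X k))) 0)"

end

theory Submission
  imports Defs
begin

text \<open>Each summand Z = max(1 - exp(eps - Y), 0) of the estimator lies in [0,1], and its mean
  under P is the hockey-stick divergence, hence at least tau * delta. The claim is therefore a
  multiplicative Chernoff lower-tail bound: Markov's inequality for exp(-theta * sum Z) and
  independence give Pr[sum Z <= s * delta] <= exp(theta * s * delta) * (E exp(-theta * Z))^s, and
  exp(-theta * z) <= 1 - (theta - theta^2/2) * z on [0,1] bounds the moment generating function by
  exp(-(theta - theta^2/2) * E Z). The choice theta = (tau - 1)/tau yields
  exp(-s (tau - 1)^2 delta / (2 tau)), which is stronger than the stated bound.\<close>

lemma exp_neg_le_quadratic:
  fixes t :: real
  assumes "0 \<le> t"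
  shows "exp (- t) \<le> 1 - t + t\<^sup>2 / 2"
proof -
  have pos: "0 < 1 - t + t\<^sup>2 / 2"
    using zero_le_power2[of "t - 1"] by (simp add: power2_eq_square algebra_simps)
  have "(1 + t + t\<^sup>2 / 2) * (1 - t + t\<^sup>2 / 2) = 1 + t ^ 4 / 4"
    by (simp add: algebra_simps power2_eq_square power4_eq_xxxx)
  then have "1 \<le> (1 + t + t\<^sup>2 / 2) * (1 - t + t\<^sup>2 / 2)"
    by simp
  also have "\<dots> \<le> exp t * (1 - t + t\<^sup>2 / 2)"
    using exp_lower_Taylor_quadratic[OF assms] pos by (intro mult_right_mono) auto
  finally show ?thesis
    by (simp add: exp_minus field_simps)
qed

lemma exp_neg_mult_le_affine:
  fixes \<theta> z :: real
  assumes "0 \<le> \<theta>" "\<theta> \<le> 1" "0 \<le> z" "z \<le> 1"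
  shows "exp (- (\<theta> * z)) \<le> 1 - (\<theta> - \<theta>\<^sup>2 / 2) * z"
proof -
  have "z\<^sup>2 \<le> z"
    using assms by (simp add: power2_eq_square mult_left_le_one_le)
  then have "(\<theta> * z)\<^sup>2 \<le> \<theta>\<^sup>2 * z"
    by (simp add: power_mult_distrib mult_left_mono)
  with exp_neg_le_quadratic[of "\<theta> * z"] assms show ?thesis
    by (simp add: algebra_simps)
qed

lemma (in prob_space) nn_integral_exp_neg_le:
  fixes Z :: "'a \<Rightarrow> real" and \<theta> :: real
  assumes Z: "Z \<in> borel_measurable M" "\<And>x. x \<in> space M \<Longrightarrow> 0 \<le> Z x \<and> Z x \<le> 1"
    and \<theta>: "0 \<le> \<theta>" "\<theta> \<le> 1"
  shows "(\<integral>\<^sup>+x. exp (- (\<theta> * Z x)) \<partial>M) \<le> exp (- ((\<theta> - \<theta>\<^sup>2 / 2) * expectation Z))"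
proof -
  define a where "a = \<theta> - \<theta>\<^sup>2 / 2"
  have a: "0 \<le> a" "a \<le> 1"
    unfolding a_def power2_eq_square
    using \<theta> mult_left_le_one_le[of \<theta> \<theta>] mult_nonneg_nonneg[of \<theta> \<theta>] by linarith+
  have int_Z: "integrable M Z"
    using Z by (intro integrable_const_bound[where B = 1]) auto
  have "(\<integral>\<^sup>+x. exp (- (\<theta> * Z x)) \<partial>M) \<le> (\<integral>\<^sup>+x. 1 - a * Z x \<partial>M)"
    using Z \<theta> unfolding a_def by (intro nn_integral_mono ennreal_leI exp_neg_mult_le_affine) auto
  also have "\<dots> = 1 - a * expectation Z"
    using int_Z Z a by (subst nn_integral_eq_integral) (auto simp: mult_le_one prob_space)
  also have "1 - a * expectation Z \<le> exp (- (a * expectation Z))"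
    by (rule exp_ge_add_one_self[of "- (a * expectation Z)", simplified])
  finally show ?thesis
    unfolding a_def by (simp add: ennreal_leI)
qed

lemma (in prob_space) emeasure_PiM_sum_le_exponential_moment:
  fixes Z :: "'a \<Rightarrow> real" and \<theta> t :: real and s :: nat
  assumes Z[measurable]: "Z \<in> borel_measurable M" and \<theta>: "0 \<le> \<theta>"
  shows "emeasure (PiM {..<s} (\<lambda>_. M)) {X \<in> space (PiM {..<s} (\<lambda>_. M)). (\<Sum>k<s. Z (X k)) \<le> t}
         \<le> exp (\<theta> * t) * (\<integral>\<^sup>+x. exp (- (\<theta> * Z x)) \<partial>M) ^ s"
proof -
  interpret product_sigma_finite "\<lambda>_. M"
    by (simp add: product_sigma_finite_def sigma_finite_measure_axioms)
  let ?A = "{X \<in> space (PiM {..<s} (\<lambda>_. M)). (\<Sum>k<s. Z (X k)) \<le> t}"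
  have markov: "indicator ?A X \<le> ennreal (exp (\<theta> * t)) * (\<Prod>k<s. ennreal (exp (- (\<theta> * Z (X k)))))"
    for X
  proof -
    have "ennreal (exp (\<theta> * t)) * (\<Prod>k<s. ennreal (exp (- (\<theta> * Z (X k)))))
          = exp (\<theta> * (t - (\<Sum>k<s. Z (X k))))"
      by (simp add: prod_ennreal ennreal_mult[symmetric] exp_sum[symmetric] exp_add[symmetric]
          right_diff_distrib sum_distrib_left sum_negf)
    moreover have "X \<in> ?A \<Longrightarrow> 1 \<le> exp (\<theta> * (t - (\<Sum>k<s. Z (X k))))"
      using \<theta> by simp
    ultimately show ?thesis
      by (cases "X \<in> ?A") auto
  qed
  have "emeasure (PiM {..<s} (\<lambda>_. M)) ?A = (\<integral>\<^sup>+X. indicator ?A X \<partial>PiM {..<s} (\<lambda>_. M))"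
    by simp
  also have "\<dots> \<le> (\<integral>\<^sup>+X. ennreal (exp (\<theta> * t)) * (\<Prod>k<s. ennreal (exp (- (\<theta> * Z (X k)))))
                    \<partial>PiM {..<s} (\<lambda>_. M))"
    by (intro nn_integral_mono markov)
  also have "\<dots> = exp (\<theta> * t) * (\<Prod>k<s. \<integral>\<^sup>+x. exp (- (\<theta> * Z x)) \<partial>M)"
    using product_nn_integral_prod[of "{..<s}" "\<lambda>_ x. ennreal (exp (- (\<theta> * Z x)))"]
    by (simp add: nn_integral_cmult)
  finally show ?thesis
    by simp
qed

lemma (in prob_space) chernoff_lower_tail:
  fixes Z :: "'a \<Rightarrow> real" and \<tau> t :: real and s :: nat
  assumes Z: "Z \<in> borel_measurable M" "\<And>x. x \<in> space M \<Longrightarrow> 0 \<le> Z x \<and> Z x \<le> 1"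
    and \<tau>: "1 \<le> \<tau>" and mean: "\<tau> * t \<le> expectation Z"
  shows "measure (PiM {..<s} (\<lambda>_. M)) {X \<in> space (PiM {..<s} (\<lambda>_. M)). (\<Sum>k<s. Z (X k)) \<le> s * t}
         \<le> exp (- (s * (\<tau> - 1)\<^sup>2 * t) / (2 * \<tau>))"
proof -
  interpret Pi: prob_space "PiM {..<s} (\<lambda>_. M)"
    by (intro prob_space_PiM prob_space_axioms)
  define \<theta> where "\<theta> = (\<tau> - 1) / \<tau>"
  define a where "a = \<theta> - \<theta>\<^sup>2 / 2"
  have \<theta>: "0 \<le> \<theta>" "\<theta> \<le> 1"
    using \<tau> by (auto simp: \<theta>_def field_simps)
  have "0 \<le> a"
    unfolding a_def power2_eq_square using \<theta> mult_left_le_one_le[of \<theta> \<theta>] by linarith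
  with mean have mean_a: "a * (\<tau> * t) \<le> a * expectation Z"
    by (rule mult_left_mono)
  have "emeasure (PiM {..<s} (\<lambda>_. M)) {X \<in> space (PiM {..<s} (\<lambda>_. M)). (\<Sum>k<s. Z (X k)) \<le> s * t}
        \<le> exp (\<theta> * (s * t)) * (\<integral>\<^sup>+x. exp (- (\<theta> * Z x)) \<partial>M) ^ s"
    using Z \<theta> by (intro emeasure_PiM_sum_le_exponential_moment) auto
  also have "\<dots> \<le> exp (\<theta> * (s * t)) * ennreal (exp (- (a * expectation Z))) ^ s"
    using nn_integral_exp_neg_le[OF Z \<theta>] unfolding a_def
    by (intro mult_left_mono power_mono) auto
  also have "\<dots> = exp (s * (\<theta> * t - a * expectation Z))"
    by (simp add: ennreal_power ennreal_mult[symmetric] exp_of_nat_mult[symmetric]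
        exp_add[symmetric] algebra_simps)
  also have "\<dots> \<le> exp (s * (\<theta> * t - a * (\<tau> * t)))"
    using mean_a by (intro ennreal_leI) (simp add: mult_left_mono)
  also have "\<theta> * t - a * (\<tau> * t) = - ((\<tau> - 1)\<^sup>2 * t) / (2 * \<tau>)"
    using \<tau> by (simp add: \<theta>_def a_def field_simps power2_eq_square)
  finally show ?thesis
    by (simp add: Pi.emeasure_eq_measure mult.assoc)
qed

lemma integral_privacy_loss_hinge_eq_hockey_stick:
  fixes mu :: "'a measure" and p q :: "'a \<Rightarrow> real" and eps :: real
  assumes p_meas: "p \<in> borel_measurable mu" and q_meas: "q \<in> borel_measurable mu"
    and p_nonneg: "\<And>x. x \<in> space mu \<Longrightarrow> p x \<ge> 0"
    and q_nonneg: "\<And>x. x \<in> space mu \<Longrightarrow> q x \<ge> 0"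
    and P_ll_Q: "absolutely_continuous (density mu (\<lambda>x. ennreal (q x)))
                                        (density mu (\<lambda>x. ennreal (p x)))"
  shows "(\<integral>x. max (1 - exp (eps - privacy_loss p q x)) 0 \<partial>density mu (\<lambda>x. ennreal (p x)))
         = hockey_stick mu p q (exp eps)"
proof -
  have q_nonzero: "AE x in mu. 0 < p x \<longrightarrow> q x \<noteq> 0"
  proof -
    have "AE x in density mu (\<lambda>x. ennreal (q x)). q x \<noteq> 0"
      using q_meas by (subst AE_density) auto
    then have "AE x in density mu (\<lambda>x. ennreal (p x)). q x \<noteq> 0"
      by (intro absolutely_continuous_AE[OF _ P_ll_Q]) auto
    then show ?thesis
      using p_meas by (subst (asm) AE_density) auto
  qed
  have "AE x in mu. p x * max (1 - exp (eps - privacy_loss p q x)) 0 = max (p x - exp eps * q x) 0"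
    using q_nonzero AE_space
  proof eventually_elim
    case (elim x)
    show ?case
    proof (cases "p x = 0")
      case True
      then show ?thesis
        using q_nonneg elim by simp
    next
      case False
      then have "0 < p x" "0 < q x"
        using elim p_nonneg q_nonneg by force+
      then have "exp (eps - privacy_loss p q x) = exp eps * q x / p x"
        by (simp add: privacy_loss_def exp_diff)
      then have "p x * max (1 - exp (eps - privacy_loss p q x)) 0
                 = p x * max (1 - exp eps * q x / p x) 0"
        by simp
      also have "\<dots> = max (p x - exp eps * q x) 0"
        using \<open>0 < p x\<close> by (simp add: max_def field_simps)
      finally show ?thesis .
    qed
  qed
  then have "(\<integral>x. p x * max (1 - exp (eps - privacy_loss p q x)) 0 \<partial>mu)
             = (\<integral>x. max (p x - exp eps * q x) 0 \<partial>mu)"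
    using p_meas q_meas by (intro integral_cong_AE) (auto simp: privacy_loss_def)
  moreover have "(\<integral>x. max (1 - exp (eps - privacy_loss p q x)) 0 \<partial>density mu (\<lambda>x. ennreal (p x)))
                 = (\<integral>x. p x * max (1 - exp (eps - privacy_loss p q x)) 0 \<partial>mu)"
    using p_meas q_meas p_nonneg by (subst integral_density) (auto simp: privacy_loss_def)
  ultimately show ?thesis
    by (simp add: hockey_stick_def)
qed

theorem theorem2:
  fixes mu :: "'a measure" and p q :: "'a \<Rightarrow> real"
    and eps delta tau :: real and s :: nat
  assumes p_meas: "p \<in> borel_measurable mu" and q_meas: "q \<in> borel_measurable mu"
    and p_nonneg: "\<And>x. x \<in> space mu \<Longrightarrow> p x \<ge> 0"
    and q_nonneg: "\<And>x. x \<in> space mu \<Longrightarrow> q x \<ge> 0"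
    and P_prob: "prob_space (density mu (\<lambda>x. ennreal (p x)))"
    and Q_prob: "prob_space (density mu (\<lambda>x. ennreal (q x)))"
    and P_ll_Q: "absolutely_continuous (density mu (\<lambda>x. ennreal (q x)))
                                        (density mu (\<lambda>x. ennreal (p x)))"
    and eps: "eps \<ge> 0" and delta: "delta > 0" and tau: "tau > 1"
    and H: "hockey_stick mu p q (exp eps) \<ge> tau * delta"
  shows "measure (PiM {..<s} (\<lambda>_. density mu (\<lambda>x. ennreal (p x))))
           {X \<in> space (PiM {..<s} (\<lambda>_. density mu (\<lambda>x. ennreal (p x)))).
              delta_hat s eps p q X < delta}
         \<le> exp (- (real s * (tau - 1)^2 * delta) / (8 * tau / 3 - 2 / 3))"
proof -
  define P where "P = density mu (\<lambda>x. ennreal (p x))"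
  define Z where "Z = (\<lambda>x. max (1 - exp (eps - privacy_loss p q x)) 0)"
  interpret P: prob_space P
    using P_prob by (simp add: P_def)
  interpret Pi: prob_space "PiM {..<s} (\<lambda>_. P)"
    by (intro prob_space_PiM P.prob_space_axioms)
  have Z_meas[measurable]: "Z \<in> borel_measurable P"
    using p_meas q_meas unfolding P_def Z_def privacy_loss_def by simp
  have "P.expectation Z = hockey_stick mu p q (exp eps)"
    unfolding P_def Z_def
    using p_meas q_meas p_nonneg q_nonneg P_ll_Q by (rule integral_privacy_loss_hinge_eq_hockey_stick)
  with H have mean: "tau * delta \<le> P.expectation Z"
    by simp
  have "{X \<in> space (PiM {..<s} (\<lambda>_. P)). delta_hat s eps p q X < delta}
        \<subseteq> {X \<in> space (PiM {..<s} (\<lambda>_. P)). (\<Sum>k<s. Z (X k)) \<le> s * delta}"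
    using delta by (cases "s = 0") (auto simp: delta_hat_def Z_def field_simps)
  then have "Pi.prob {X \<in> space (PiM {..<s} (\<lambda>_. P)). delta_hat s eps p q X < delta}
             \<le> Pi.prob {X \<in> space (PiM {..<s} (\<lambda>_. P)). (\<Sum>k<s. Z (X k)) \<le> s * delta}"
    by (intro Pi.finite_measure_mono) measurable
  also have "\<dots> \<le> exp (- (s * (tau - 1)\<^sup>2 * delta) / (2 * tau))"
    using Z_meas tau mean by (intro P.chernoff_lower_tail) (auto simp: Z_def)
  also have "\<dots> \<le> exp (- (s * (tau - 1)\<^sup>2 * delta) / (8 * tau / 3 - 2 / 3))"
    using tau delta by (auto intro!: divide_left_mono)
  finally show ?thesis
    unfolding P_def .
qed

end
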